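(* Let $-1\le a<1$ and let $\mathfrak g=\mathfrak r_{3,a}$, the Lie algebra with basis $\{e_1,e_2,e_3\}$ and nonzero brackets $[e_1,e_2]=e_2$, $[e_1,e_3]=ae_3$, identified with $\mathbb R^3$ via this basis. Then $$U=\left\{\begin{pmatrix}1&0&0\\0&1&0\\0&\lambda&1\end{pmatrix}:\lambda\in\mathbb R\right\}$$ is a set of representatives of $\mathcal{PM}(\mathfrak g)$.
   Context: $\mathcal M(\mathfrak g)$ is the set of inner products on $\mathfrak g\cong\mathbb R^3$, with $\mathrm{GL}_3(\mathbb R)$-action $g.\langle\cdot,\cdot\rangle=\langle g^{-1}\cdot,g^{-1}\cdot\rangle$; $\langle\cdot,\cdot\rangle_0$ makes $\{e_1,e_2,e_3\}$ orthonormal. Two inner products are isometric up to scaling if $\langle\cdot,\cdot\rangle_1=k\langle f\cdot,f\cdot\rangle_2$ for some $k>0$ and Lie algebra automorphism $f$; $[\langle\cdot,\cdot\rangle]$ denotes the equivalence class and $\mathcal{PM}(\mathfrak g)$ the set of classes. A subset $U\subset\mathrm{GL}_3(\mathbb R)$ is a set of representatives of $\mathcal{PM}(\mathfrak g)$ if $\mathcal{PM}(\mathfrak g)=\{[h.\langle\cdot,\cdot\rangle_0]: h\in U\}$. *)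

theory Defs
  imports "HOL-Analysis.Analysis"
begin

type_synonym vec3 = "real ^ 3"
type_synonym mat3 = "real ^ 3 ^ 3"

text \<open>Lie bracket of r_{3,a} in coordinates w.r.t. e1,e2,e3:
  [e1,e2] = e2, [e1,e3] = a e3, all other brackets of basis vectors zero,
  extended bilinearly and antisymmetrically.\<close>
definition r3a_bracket :: "real \<Rightarrow> vec3 \<Rightarrow> vec3 \<Rightarrow> vec3" where
  "r3a_bracket a x y = vector [0, x$1 * y$2 - x$2 * y$1, a * (x$1 * y$3 - x$3 * y$1)]"

definition lie_aut :: "(vec3 \<Rightarrow> vec3 \<Rightarrow> vec3) \<Rightarrow> (vec3 \<Rightarrow> vec3) \<Rightarrow> bool" where
  "lie_aut br f \<longleftrightarrow> linear f \<and> bij f \<and> (\<forall>x y. f (br x y) = br (f x) (f y))"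

definition inner_products :: "(vec3 \<Rightarrow> vec3 \<Rightarrow> real) set" where
  "inner_products = {B. bilinear B \<and> (\<forall>x y. B x y = B y x) \<and> (\<forall>x. x \<noteq> 0 \<longrightarrow> B x x > 0)}"

definition GL3 :: "mat3 set" where
  "GL3 = {g. invertible g}"

definition act :: "mat3 \<Rightarrow> (vec3 \<Rightarrow> vec3 \<Rightarrow> real) \<Rightarrow> (vec3 \<Rightarrow> vec3 \<Rightarrow> real)" where
  "act g B = (\<lambda>x y. B (matrix_inv g *v x) (matrix_inv g *v y))"

definition ip0 :: "vec3 \<Rightarrow> vec3 \<Rightarrow> real" where
  "ip0 = (\<lambda>x y. x \<bullet> y)"

definition isom_scal :: "(vec3 \<Rightarrow> vec3 \<Rightarrow> vec3) \<Rightarrow> (vec3 \<Rightarrow> vec3 \<Rightarrow> real) \<Rightarrow> (vec3 \<Rightarrow> vec3 \<Rightarrow> real) \<Rightarrow> bool" where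
  "isom_scal br B1 B2 \<longleftrightarrow> (\<exists>k f. k > 0 \<and> lie_aut br f \<and> (\<forall>x y. B1 x y = k * B2 (f x) (f y)))"

definition ip_class :: "(vec3 \<Rightarrow> vec3 \<Rightarrow> vec3) \<Rightarrow> (vec3 \<Rightarrow> vec3 \<Rightarrow> real) \<Rightarrow> (vec3 \<Rightarrow> vec3 \<Rightarrow> real) set" where
  "ip_class br B = {B' \<in> inner_products. isom_scal br B' B}"

definition PM :: "(vec3 \<Rightarrow> vec3 \<Rightarrow> vec3) \<Rightarrow> (vec3 \<Rightarrow> vec3 \<Rightarrow> real) set set" where
  "PM br = ip_class br ` inner_products"

definition set_of_reps :: "(vec3 \<Rightarrow> vec3 \<Rightarrow> vec3) \<Rightarrow> mat3 set \<Rightarrow> bool" where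
  "set_of_reps br U \<longleftrightarrow> U \<subseteq> GL3 \<and> PM br = {ip_class br (act h ip0) | h. h \<in> U}"

end

theory Submission
  imports Defs
begin

text \<open>For every \<open>a\<close>, the linear maps sending \<open>e\<^sub>1 \<mapsto> e\<^sub>1 - \<alpha> e\<^sub>2 - \<beta> e\<^sub>3\<close>,
  \<open>e\<^sub>2 \<mapsto> s e\<^sub>2\<close>, \<open>e\<^sub>3 \<mapsto> t e\<^sub>3\<close> (\<open>s, t \<noteq> 0\<close>) are automorphisms of \<open>\<^bold>r\<^sub>3\<^sub>,\<^sub>a\<close>.
  Given an inner product, choose \<open>\<alpha>, \<beta>\<close> so that the image of \<open>e\<^sub>1\<close> is orthogonal to
  \<open>e\<^sub>2, e\<^sub>3\<close> (possible since the Gram determinant of \<open>e\<^sub>2, e\<^sub>3\<close> is positive), and then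
  \<open>s, t\<close> so that the pulled-back Gram matrix is a positive multiple of
  \<open>[[1,0,0],[0,1+\<lambda>\<^sup>2,-\<lambda>],[0,-\<lambda>,1]]\<close>, the Gram matrix of \<open>h\<^sub>\<lambda>.\<langle>\<cdot>,\<cdot>\<rangle>\<^sub>0\<close>.\<close>

lemma matrix_inv_eqI:
  fixes A B :: "'a::comm_ring_1 ^ 'n ^ 'n"
  assumes "A ** B = mat 1" "B ** A = mat 1"
  shows "matrix_inv A = B"
proof -
  let ?P = "\<lambda>B'. A ** B' = mat 1 \<and> B' ** A = mat 1"
  have "?P (matrix_inv A)"
    unfolding matrix_inv_def by (rule someI[of ?P B]) (use assms in blast)
  then have "matrix_inv A = matrix_inv A ** (A ** B)"
    using assms(1) by (simp add: matrix_mul_rid)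
  also have "\<dots> = B"
    using \<open>?P (matrix_inv A)\<close> by (simp add: matrix_mul_assoc matrix_mul_lid)
  finally show ?thesis .
qed

lemma matrix_mul_matrix_inv:
  fixes A :: "'a::semiring_1 ^ 'n ^ 'n"
  assumes "invertible A"
  shows "A ** matrix_inv A = mat 1"
  using assms unfolding invertible_def matrix_inv_def by (rule someI_ex[THEN conjunct1])

lemma act_ip0_in_inner_products:
  assumes "invertible h"
  shows "act h ip0 \<in> inner_products"
proof -
  let ?M = "matrix_inv h"
  have "bilinear (\<lambda>x y. (?M *v x) \<bullet> (?M *v y))"
    unfolding bilinear_def
    by (auto intro!: linearI simp: matrix_vector_right_distrib matrix_vector_mult_scaleR inner_add_left inner_add_right)
  moreover have "(?M *v x) \<bullet> (?M *v x) > 0" if "x \<noteq> 0" for x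
  proof -
    have "h *v (?M *v x) = x"
      using matrix_mul_matrix_inv[OF assms] by (simp add: matrix_vector_mul_assoc)
    with that have "?M *v x \<noteq> 0" by auto
    then show ?thesis by simp
  qed
  ultimately show ?thesis
    by (simp add: inner_products_def act_def ip0_def inner_commute)
qed

lemma lie_aut_inv:
  assumes "lie_aut br f"
  shows "lie_aut br (inv f)"
proof -
  have f: "linear f" "bij f" "\<And>x y. f (br x y) = br (f x) (f y)"
    using assms by (auto simp: lie_aut_def)
  have "inv f (br x y) = br (inv f x) (inv f y)" for x y
    using f(3)[of "inv f x" "inv f y"] f(2) by (metis bij_inv_eq_iff bij_is_surj surj_f_inv_f)
  then show ?thesis
    using f by (simp add: lie_aut_def bij_imp_bij_inv inj_linear_imp_inv_linear bij_is_inj)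
qed

lemma lie_aut_comp:
  assumes "lie_aut br f" "lie_aut br g"
  shows "lie_aut br (g \<circ> f)"
  using assms by (auto simp: lie_aut_def linear_compose bij_comp)

lemma isom_scal_sym:
  assumes "isom_scal br B1 B2"
  shows "isom_scal br B2 B1"
proof -
  obtain k f where k: "k > 0" "lie_aut br f" "\<And>x y. B1 x y = k * B2 (f x) (f y)"
    using assms by (auto simp: isom_scal_def)
  have "B2 x y = (1 / k) * B1 (inv f x) (inv f y)" for x y
    using k by (simp add: lie_aut_def bij_is_surj surj_f_inv_f)
  then show ?thesis
    unfolding isom_scal_def using k lie_aut_inv by (intro exI[of _ "1 / k"] exI[of _ "inv f"]) simp
qed

lemma isom_scal_trans:
  assumes "isom_scal br B1 B2" "isom_scal br B2 B3"
  shows "isom_scal br B1 B3"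
proof -
  obtain k f where k: "k > 0" "lie_aut br f" "\<And>x y. B1 x y = k * B2 (f x) (f y)"
    using assms by (auto simp: isom_scal_def)
  obtain k' f' where k': "k' > 0" "lie_aut br f'" "\<And>x y. B2 x y = k' * B3 (f' x) (f' y)"
    using assms by (auto simp: isom_scal_def)
  have "B1 x y = (k * k') * B3 ((f' \<circ> f) x) ((f' \<circ> f) y)" for x y
    using k(3) k'(3) by simp
  then show ?thesis
    unfolding isom_scal_def using k k' lie_aut_comp
    by (intro exI[of _ "k * k'"] exI[of _ "f' \<circ> f"]) simp
qed

lemma ip_class_eq:
  assumes "isom_scal br B1 B2"
  shows "ip_class br B1 = ip_class br B2"
proof -
  have "isom_scal br B B1 \<longleftrightarrow> isom_scal br B B2" for B
    using assms isom_scal_trans isom_scal_sym by metis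
  then show ?thesis
    by (simp add: ip_class_def)
qed

lemma set_of_repsI:
  assumes U: "U \<subseteq> GL3"
    and reps: "\<And>B. B \<in> inner_products \<Longrightarrow> \<exists>h\<in>U. isom_scal br B (act h ip0)"
  shows "set_of_reps br U"
proof -
  have "ip_class br B \<in> {ip_class br (act h ip0) | h. h \<in> U}" if "B \<in> inner_products" for B
    using reps[OF that] ip_class_eq by blast
  moreover have "act h ip0 \<in> inner_products" if "h \<in> U" for h
    using that U act_ip0_in_inner_products by (auto simp: GL3_def)
  ultimately show ?thesis
    unfolding set_of_reps_def PM_def using U by blast
qed

lemma bilinear_pullback:
  assumes "bilinear B" "linear f"
  shows "bilinear (\<lambda>x y. B (f x) (f y))"
proof -
  have B: "linear (B u)" "linear (\<lambda>v. B v w)" for u w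
    using assms(1) by (simp_all add: bilinear_def)
  show ?thesis
    using linear_compose[OF assms(2) B(1)] linear_compose[OF assms(2) B(2)]
    by (simp add: bilinear_def comp_def)
qed

lemma bilinear_scale:
  fixes B :: "'a::real_vector \<Rightarrow> 'b::real_vector \<Rightarrow> real"
  assumes "bilinear B"
  shows "bilinear (\<lambda>x y. k * B x y)"
proof -
  have B: "linear (B u)" "linear (\<lambda>v. B v w)" for u w
    using assms by (simp_all add: bilinear_def)
  show ?thesis
    using linear_compose_scale_right[OF B(1), of k] linear_compose_scale_right[OF B(2), of k]
    by (simp add: bilinear_def)
qed

lemma inner_products_cauchy_schwarz_strict:
  assumes "B \<in> inner_products" "y \<noteq> 0" "B y y *\<^sub>R x \<noteq> B x y *\<^sub>R y"
  shows "(B x y)\<^sup>2 < B x x * B y y"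
proof -
  have bil: "bilinear B" and sym: "B y x = B x y" and pos: "\<And>v. v \<noteq> 0 \<Longrightarrow> B v v > 0"
    using assms(1) by (auto simp: inner_products_def)
  let ?v = "B y y *\<^sub>R x - B x y *\<^sub>R y"
  have "B ?v ?v = B y y * (B x x * B y y - (B x y)\<^sup>2)"
    by (simp add: bilinear_lsub[OF bil] bilinear_rsub[OF bil] bilinear_lmul[OF bil]
        bilinear_rmul[OF bil] sym algebra_simps power2_eq_square)
  moreover have "B ?v ?v > 0" "B y y > 0"
    using assms(2,3) pos by auto
  ultimately show ?thesis
    by (simp add: zero_less_mult_iff)
qed

lemma vec3_Basis_cases:
  assumes "(i::vec3) \<in> Basis"
  obtains "i = axis 1 1" | "i = axis 2 1" | "i = axis 3 1"
  using assms by (auto simp: Basis_vec_def) (metis exhaust_3)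

lemma solve_2x2:
  fixes g12 g13 g22 g23 g33 :: real
  assumes "g22 * g33 - g23\<^sup>2 \<noteq> 0"
  obtains al be where "g12 = al * g22 + be * g23" "g13 = al * g23 + be * g33"
proof
  define d where "d = g22 * g33 - g23\<^sup>2"
  have d: "d \<noteq> 0" using assms by (simp add: d_def)
  have "g12 * d = (g12 * g33 - g13 * g23) * g22 + (g13 * g22 - g12 * g23) * g23"
    "g13 * d = (g12 * g33 - g13 * g23) * g23 + (g13 * g22 - g12 * g23) * g33"
    unfolding d_def power2_eq_square by algebra+
  with d show "g12 = (g12 * g33 - g13 * g23) / d * g22 + (g13 * g22 - g12 * g23) / d * g23"
    "g13 = (g12 * g33 - g13 * g23) / d * g23 + (g13 * g22 - g12 * g23) / d * g33"
    by (simp_all add: divide_simps)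
qed

lemma gram2_normal_form:
  fixes g22 g23 g33 k :: real
  assumes g33: "g33 > 0" and det: "g23\<^sup>2 < g22 * g33" and k: "k > 0"
  obtains s t l where "s > 0" "t > 0"
    "s\<^sup>2 * g22 = k * (1 + l\<^sup>2)" "s * t * g23 = - k * l" "t\<^sup>2 * g33 = k"
proof
  define r where "r = sqrt (g22 * g33 - g23\<^sup>2)"
  have r: "r > 0" "r\<^sup>2 = g22 * g33 - g23\<^sup>2"
    using det by (simp_all add: r_def)
  define s where "s = sqrt k * sqrt g33 / r"
  define t where "t = sqrt k / sqrt g33"
  show "s > 0" "t > 0"
    using g33 k r by (simp_all add: s_def t_def)
  show "t\<^sup>2 * g33 = k"
    using g33 k by (simp add: t_def power_divide)
  have "s * t = k / r"
    using g33 k by (simp add: s_def t_def)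
  then show "s * t * g23 = - k * (- g23 / r)"
    by simp
  have "s\<^sup>2 * g22 * r\<^sup>2 = k * g33 * g22"
    using g33 k r(1) by (simp add: s_def power_divide power_mult_distrib)
  also have "\<dots> = k * (r\<^sup>2 + g23\<^sup>2)"
    using r(2) by simp
  also have "\<dots> = k * (1 + (- g23 / r)\<^sup>2) * r\<^sup>2"
    using r(1) by (simp add: power_divide field_simps)
  finally show "s\<^sup>2 * g22 = k * (1 + (- g23 / r)\<^sup>2)"
    using r(1) by simp
qed

definition shear :: "real \<Rightarrow> mat3" where
  "shear l = vector [vector [1, 0, 0], vector [0, 1, 0], vector [0, l, 1]]"

lemma shear_mult_shear_neg: "shear l ** shear (- l) = mat 1" "shear (- l) ** shear l = mat 1"
  by (simp_all add: shear_def vec_eq_iff forall_3 matrix_matrix_mult_def sum_3 mat_def)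

lemma invertible_shear: "invertible (shear l)"
  using shear_mult_shear_neg invertible_def by blast

lemma act_shear_ip0:
  "act (shear l) ip0 x y = x$1 * y$1 + x$2 * y$2 + (x$3 - l * x$2) * (y$3 - l * y$2)"
  unfolding act_def ip0_def matrix_inv_eqI[OF shear_mult_shear_neg]
  by (simp add: inner_vec_def sum_3 matrix_vector_mult_def shear_def algebra_simps)

lemma symmetric_bilinear_eq_shear_form:
  fixes F :: "vec3 \<Rightarrow> vec3 \<Rightarrow> real"
  assumes bil: "bilinear F" and sym: "\<And>x y. F y x = F x y"
    and gram:
      "F (axis 1 1) (axis 1 1) = k" "F (axis 1 1) (axis 2 1) = 0" "F (axis 1 1) (axis 3 1) = 0"
      "F (axis 2 1) (axis 2 1) = k * (1 + l\<^sup>2)" "F (axis 2 1) (axis 3 1) = - k * l"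
      "F (axis 3 1) (axis 3 1) = k"
  shows "F = (\<lambda>x y. k * act (shear l) ip0 x y)"
proof (rule bilinear_eq_stdbasis[OF bil])
  show "bilinear (\<lambda>x y. k * act (shear l) ip0 x y)"
    using act_ip0_in_inner_products[OF invertible_shear] by (simp add: bilinear_scale inner_products_def)
  have gram_transposed:
    "F (axis 2 1) (axis 1 1) = 0" "F (axis 3 1) (axis 1 1) = 0" "F (axis 3 1) (axis 2 1) = - k * l"
    using gram(2,3,5) sym by metis+
  show "F i j = k * act (shear l) ip0 i j" if "i \<in> Basis" "j \<in> Basis" for i j
    using that
    by (elim vec3_Basis_cases)
      (simp_all add: gram gram_transposed, simp_all add: act_shear_ip0 axis_def power2_eq_square)
qed

definition r3a_aut :: "real \<Rightarrow> real \<Rightarrow> real \<Rightarrow> real \<Rightarrow> vec3 \<Rightarrow> vec3" where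
  "r3a_aut s t al be x = vector [x$1, s * x$2 - al * x$1, t * x$3 - be * x$1]"

lemma lie_aut_r3a_aut:
  assumes "s \<noteq> 0" "t \<noteq> 0"
  shows "lie_aut (r3a_bracket a) (r3a_aut s t al be)"
  unfolding lie_aut_def
proof (intro conjI allI)
  show "linear (r3a_aut s t al be)"
    by (rule linearI) (simp_all add: r3a_aut_def vec_eq_iff forall_3 algebra_simps)
  let ?g = "r3a_aut (1 / s) (1 / t) (- (al / s)) (- (be / t))"
  show "bij (r3a_aut s t al be)"
    by (rule o_bij[of ?g]) (simp_all add: fun_eq_iff r3a_aut_def vec_eq_iff forall_3 field_simps assms)
  show "r3a_aut s t al be (r3a_bracket a x y) = r3a_bracket a (r3a_aut s t al be x) (r3a_aut s t al be y)" for x y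
    by (simp add: r3a_aut_def r3a_bracket_def vec_eq_iff forall_3 algebra_simps)
qed

lemma r3a_aut_normalizes_inner_product:
  assumes B: "B \<in> inner_products"
  obtains s t al be k l where "s > 0" "t > 0" "k > 0"
    "B (r3a_aut s t al be (axis 1 1)) (r3a_aut s t al be (axis 1 1)) = k"
    "B (r3a_aut s t al be (axis 1 1)) (r3a_aut s t al be (axis 2 1)) = 0"
    "B (r3a_aut s t al be (axis 1 1)) (r3a_aut s t al be (axis 3 1)) = 0"
    "B (r3a_aut s t al be (axis 2 1)) (r3a_aut s t al be (axis 2 1)) = k * (1 + l\<^sup>2)"
    "B (r3a_aut s t al be (axis 2 1)) (r3a_aut s t al be (axis 3 1)) = - k * l"
    "B (r3a_aut s t al be (axis 3 1)) (r3a_aut s t al be (axis 3 1)) = k"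
proof -
  have bil: "bilinear B" and sym: "\<And>x y. B y x = B x y" and pos: "\<And>x. x \<noteq> 0 \<Longrightarrow> B x x > 0"
    using B by (auto simp: inner_products_def)
  let ?e1 = "axis 1 1 :: vec3" and ?e2 = "axis 2 1 :: vec3" and ?e3 = "axis 3 1 :: vec3"
  have g33: "B ?e3 ?e3 > 0"
    by (rule pos) (simp add: axis_eq_0_iff)
  have cs: "(B ?e2 ?e3)\<^sup>2 < B ?e2 ?e2 * B ?e3 ?e3"
  proof (rule inner_products_cauchy_schwarz_strict[OF B])
    show "B ?e3 ?e3 *\<^sub>R ?e2 \<noteq> B ?e2 ?e3 *\<^sub>R ?e3"
      using g33 by (auto simp: vec_eq_iff axis_def dest: spec[of _ 2])
  qed (simp add: axis_eq_0_iff)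
  then have "B ?e2 ?e2 * B ?e3 ?e3 - (B ?e2 ?e3)\<^sup>2 \<noteq> 0"
    by simp
  then obtain al be where
    al_be: "B ?e1 ?e2 = al * B ?e2 ?e2 + be * B ?e2 ?e3" "B ?e1 ?e3 = al * B ?e2 ?e3 + be * B ?e3 ?e3"
    by (rule solve_2x2)
  define u where "u = ?e1 - al *\<^sub>R ?e2 - be *\<^sub>R ?e3"
  define k where "k = B u u"
  have "u $ 1 = 1"
    by (simp add: u_def axis_def)
  then have k: "k > 0"
    unfolding k_def by (intro pos) auto
  have u_orth: "B u ?e2 = 0" "B u ?e3 = 0"
    using al_be sym[of ?e2 ?e3] by (simp_all add: u_def bilinear_lsub[OF bil] bilinear_lmul[OF bil])
  obtain s t l where st: "s > 0" "t > 0"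
    and gram: "s\<^sup>2 * B ?e2 ?e2 = k * (1 + l\<^sup>2)" "s * t * B ?e2 ?e3 = - k * l" "t\<^sup>2 * B ?e3 ?e3 = k"
    using gram2_normal_form[OF g33 cs k] by blast
  have f_axes: "r3a_aut s t al be ?e1 = u" "r3a_aut s t al be ?e2 = s *\<^sub>R ?e2"
    "r3a_aut s t al be ?e3 = t *\<^sub>R ?e3"
    by (simp_all add: r3a_aut_def u_def vec_eq_iff forall_3 axis_def)
  show ?thesis
    by (rule that[of s t k al be l, OF st k])
      (use u_orth gram in \<open>simp_all add: f_axes k_def bilinear_lmul[OF bil] bilinear_rmul[OF bil]
        power2_eq_square mult_ac\<close>)
qed

lemma r3a_isom_scal_shear:
  assumes B: "B \<in> inner_products"
  shows "\<exists>l. isom_scal (r3a_bracket a) B (act (shear l) ip0)"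
proof -
  obtain s t al be k l where st: "s > 0" "t > 0" and k: "k > 0"
    and gram:
      "B (r3a_aut s t al be (axis 1 1)) (r3a_aut s t al be (axis 1 1)) = k"
      "B (r3a_aut s t al be (axis 1 1)) (r3a_aut s t al be (axis 2 1)) = 0"
      "B (r3a_aut s t al be (axis 1 1)) (r3a_aut s t al be (axis 3 1)) = 0"
      "B (r3a_aut s t al be (axis 2 1)) (r3a_aut s t al be (axis 2 1)) = k * (1 + l\<^sup>2)"
      "B (r3a_aut s t al be (axis 2 1)) (r3a_aut s t al be (axis 3 1)) = - k * l"
      "B (r3a_aut s t al be (axis 3 1)) (r3a_aut s t al be (axis 3 1)) = k"
    by (rule r3a_aut_normalizes_inner_product[OF B])
  have bil: "bilinear B" and sym: "\<And>x y. B y x = B x y"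
    using B by (auto simp: inner_products_def)
  define f where "f = r3a_aut s t al be"
  have aut: "lie_aut (r3a_bracket a) f"
    unfolding f_def using st by (simp add: lie_aut_r3a_aut)
  have "(\<lambda>x y. B (f x) (f y)) = (\<lambda>x y. k * act (shear l) ip0 x y)"
  proof (rule symmetric_bilinear_eq_shear_form)
    show "bilinear (\<lambda>x y. B (f x) (f y))"
      using bil aut by (simp add: bilinear_pullback lie_aut_def)
    show "B (f y) (f x) = B (f x) (f y)" for x y
      by (rule sym)
  qed (use gram in \<open>simp_all add: f_def\<close>)
  then have "act (shear l) ip0 x y = (1 / k) * B (f x) (f y)" for x y
    using k by (simp add: fun_eq_iff)
  then have "isom_scal (r3a_bracket a) (act (shear l) ip0) B"
    unfolding isom_scal_def using aut k by (intro exI[of _ "1 / k"] exI[of _ f]) simp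
  then show ?thesis
    using isom_scal_sym by blast
qed

theorem proposition3p9:
  fixes a :: real
  assumes "-1 \<le> a" and "a < 1"
  shows "set_of_reps (r3a_bracket a)
           {vector [vector [1, 0, 0], vector [0, 1, 0], vector [0, l, 1]] | l. True}"
proof -
  have "{vector [vector [1, 0, 0], vector [0, 1, 0], vector [0, l, 1]] | l. True} = range shear"
    by (auto simp: shear_def)
  moreover have "set_of_reps (r3a_bracket a) (range shear)"
  proof (rule set_of_repsI)
    show "range shear \<subseteq> GL3"
      using invertible_shear by (auto simp: GL3_def)
    show "\<exists>h\<in>range shear. isom_scal (r3a_bracket a) B (act h ip0)" if "B \<in> inner_products" for B
      using r3a_isom_scal_shear[OF that] by blast
  qed
  ultimately show ?thesis
    by simp
qed

end
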